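(* Let $(R,B)$ be an EIC problem with problem graph $G$ and let $(\tilde N_1,\dots,\tilde N_n)$ be a neighborhood partition. For each $w\in[n]$, let $(R^{(w)},B^{(w)})$ be the EIC problem induced by $\tilde N_w$, and let $\beta^{(w)}\in\mathbb{F}_2^{h_w\times m}$ be (the zero-column extension of) a centralized linear broadcast solution to $(R^{(w)},B^{(w)})$. Then $\beta^{(1)},\dots,\beta^{(n)}$ is a task-based solution to $(R,B)$ of length $\sum_{i=1}^n h_i$.
   Context: An EIC problem is a pair $(R,B)$ of matrices in $\mathbb{F}_2^{n\times m}$ with disjoint supports (node $u$ needs block $a$ iff $R_{ua}=1$, has it iff $B_{ua}=1$). $P=\{(u,a):R_{ua}=1\}$. The problem graph $G=(V,E)$ has vertices $V=\{v_{(u,a)}:(u,a)\in P\}$ and a directed edge from $v_{(u,a)}$ to $v_{(w,b)}$ iff $B_{ub}=1$ or $a=b$. $B_u$ denotes row $u$ of $B$, $\mathrm{diag}(B_u)$ the diagonal matrix with diagonal $B_u$, $\boldsymbol e_a$ the $a$-th standard basis row vector. The sender neighborhood of node $k$ is $N_k=\{v_{(w,b)}\in V: B_{kb}=1\}$. A neighborhood partition is a tuple $(\tilde N_1,\dots,\tilde N_n)$ with $\tilde N_i\subseteq N_i$, pairwise disjoint, and $\bigcup_i\tilde N_i=V$. For $S\subseteq V$, the EIC problem induced by $S$ is defined on the block set $\mathcal{B}_S=\{a:\exists u,\ v_{(u,a)}\in S\}$: $R^{S}\in\mathbb{F}_2^{n\times\mathcal{B}_S}$ has $R^S_{ua}=1$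 iff $v_{(u,a)}\in S$, and $B^{S}$ is the restriction of $B$ to the columns $\mathcal{B}_S$; its problem graph is the induced subgraph $G|_S$. A centralized linear broadcast solution to an EIC problem $(R',B')$ on block set $\mathcal{B}$ is a matrix $\beta$ with $h$ rows and columns indexed by $\mathcal{B}$ such that for each requirement pair $(u,a)$ of $(R',B')$ there is $\boldsymbol\alpha$ with $\boldsymbol e_a=\boldsymbol\alpha\cdot\left[\begin{smallmatrix}\beta\\ \mathrm{diag}(B'_u)\end{smallmatrix}\right]$; its zero-column extension is the $h\times m$ matrix agreeing with $\beta$ on columns in $\mathcal{B}$ and zero elsewhere. A linear broadcast solution to $(R,B)$ is a tuple $\beta^{(1)},\dots,\beta^{(n)}$, $\beta^{(u)}\in\mathbb{F}_2^{h_u\times m}$, such that the $a$-th column of $\beta^{(u)}$ is zero whenever $B_{ua}=0$ and for each $(u,a)\in P$, $\boldsymbol e_a$ is an $\mathbb{F}_2$-linear combination of the rows of all $\beta^{(\ell)}$ and of $\mathrm{diag}(B_u)$. It is task-based if for every $(u,a)\in P$ there is $\ell\in[n]$ and $\boldsymbol\alpha\in\mathbb{F}_2^{h_\ell+m}$ with $\boldsymbol e_a=\boldsymbol\alpha\cdot\left[\begin{smallmatrix}\beta^{(\ell)}\\ \mathrm{diag}(B_u)\end{smallmatrix}\right]$. Its length is $\sum_u h_u$. *)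

theory Defs
  imports Main "HOL-Library.Z2"
begin

text \<open>F_2 is the type bit. Nodes are 0..<n, blocks 0..<m (0-based indexing).
 Matrices are functions row \<Rightarrow> column \<Rightarrow> bit; a vertex v_(u,a) is identified
 with the pair (u,a).\<close>

definition eic_problem :: "nat \<Rightarrow> nat \<Rightarrow> (nat \<Rightarrow> nat \<Rightarrow> bit) \<Rightarrow> (nat \<Rightarrow> nat \<Rightarrow> bit) \<Rightarrow> bool" where
  "eic_problem n m R B \<longleftrightarrow> (\<forall>u<n. \<forall>a<m. \<not> (R u a = 1 \<and> B u a = 1))"

text \<open>Requirement pairs P = vertex set of the problem graph.\<close>
definition req_pairs :: "nat \<Rightarrow> nat \<Rightarrow> (nat \<Rightarrow> nat \<Rightarrow> bit) \<Rightarrow> (nat \<times> nat) set" where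
  "req_pairs n m R = {(u, a). u < n \<and> a < m \<and> R u a = 1}"

definition problem_edges :: "nat \<Rightarrow> nat \<Rightarrow> (nat \<Rightarrow> nat \<Rightarrow> bit) \<Rightarrow> (nat \<Rightarrow> nat \<Rightarrow> bit)
    \<Rightarrow> ((nat \<times> nat) \<times> (nat \<times> nat)) set" where
  "problem_edges n m R B = {((u, a), (w, b)). (u, a) \<in> req_pairs n m R \<and> (w, b) \<in> req_pairs n m R
      \<and> (B u b = 1 \<or> a = b)}"

definition sender_nbhd :: "nat \<Rightarrow> nat \<Rightarrow> (nat \<Rightarrow> nat \<Rightarrow> bit) \<Rightarrow> (nat \<Rightarrow> nat \<Rightarrow> bit) \<Rightarrow> nat
    \<Rightarrow> (nat \<times> nat) set" where
  "sender_nbhd n m R B k = {(w, b) \<in> req_pairs n m R. B k b = 1}"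

definition nbhd_partition :: "nat \<Rightarrow> nat \<Rightarrow> (nat \<Rightarrow> nat \<Rightarrow> bit) \<Rightarrow> (nat \<Rightarrow> nat \<Rightarrow> bit)
    \<Rightarrow> (nat \<Rightarrow> (nat \<times> nat) set) \<Rightarrow> bool" where
  "nbhd_partition n m R B Nt \<longleftrightarrow>
     (\<forall>i<n. Nt i \<subseteq> sender_nbhd n m R B i) \<and>
     (\<forall>i<n. \<forall>j<n. i \<noteq> j \<longrightarrow> Nt i \<inter> Nt j = {}) \<and>
     (\<Union>i<n. Nt i) = req_pairs n m R"

text \<open>Induced problem: block set, requirement matrix (B^S is B restricted to the block set).\<close>
definition induced_blocks :: "(nat \<times> nat) set \<Rightarrow> nat set" where
  "induced_blocks S = {a. \<exists>u. (u, a) \<in> S}"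

definition induced_R :: "(nat \<times> nat) set \<Rightarrow> nat \<Rightarrow> nat \<Rightarrow> bit" where
  "induced_R S u a = (if (u, a) \<in> S then 1 else 0)"

definition unit_vec :: "'c \<Rightarrow> 'c \<Rightarrow> bit" where
  "unit_vec a = (\<lambda>c. if c = a then 1 else 0)"

definition diag_mat :: "('c \<Rightarrow> bit) \<Rightarrow> 'c \<Rightarrow> 'c \<Rightarrow> bit" where
  "diag_mat d = (\<lambda>r c. if r = c then d c else 0)"

definition stack :: "('r1 \<Rightarrow> 'c \<Rightarrow> bit) \<Rightarrow> ('r2 \<Rightarrow> 'c \<Rightarrow> bit) \<Rightarrow> ('r1 + 'r2) \<Rightarrow> 'c \<Rightarrow> bit" where
  "stack M D = (\<lambda>i c. case i of Inl k \<Rightarrow> M k c | Inr r \<Rightarrow> D r c)"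

definition is_lin_comb :: "'r set \<Rightarrow> 'c set \<Rightarrow> ('r \<Rightarrow> 'c \<Rightarrow> bit) \<Rightarrow> ('c \<Rightarrow> bit) \<Rightarrow> bool" where
  "is_lin_comb I C M v \<longleftrightarrow> (\<exists>\<alpha>. \<forall>c\<in>C. v c = (\<Sum>i\<in>I. \<alpha> i * M i c))"

definition centralized_solution :: "nat \<Rightarrow> nat set \<Rightarrow> (nat \<Rightarrow> nat \<Rightarrow> bit) \<Rightarrow> (nat \<Rightarrow> nat \<Rightarrow> bit)
    \<Rightarrow> nat \<Rightarrow> (nat \<Rightarrow> nat \<Rightarrow> bit) \<Rightarrow> bool" where
  "centralized_solution n C R' B' h \<beta> \<longleftrightarrow>
     (\<forall>u<n. \<forall>a\<in>C. R' u a = 1 \<longrightarrow>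
        is_lin_comb ({..<h} <+> C) C (stack \<beta> (diag_mat (B' u))) (unit_vec a))"

definition zero_col_ext :: "nat \<Rightarrow> nat set \<Rightarrow> nat \<Rightarrow> (nat \<Rightarrow> nat \<Rightarrow> bit) \<Rightarrow> (nat \<Rightarrow> nat \<Rightarrow> bit) \<Rightarrow> bool" where
  "zero_col_ext m C h \<beta> \<beta>' \<longleftrightarrow>
     (\<forall>i<h. \<forall>c<m. \<beta>' i c = (if c \<in> C then \<beta> i c else 0))"

definition linear_broadcast_solution :: "nat \<Rightarrow> nat \<Rightarrow> (nat \<Rightarrow> nat \<Rightarrow> bit) \<Rightarrow> (nat \<Rightarrow> nat \<Rightarrow> bit)
    \<Rightarrow> (nat \<Rightarrow> nat) \<Rightarrow> (nat \<Rightarrow> nat \<Rightarrow> nat \<Rightarrow> bit) \<Rightarrow> bool" where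
  "linear_broadcast_solution n m R B h \<beta> \<longleftrightarrow>
     (\<forall>u<n. \<forall>i<h u. \<forall>a<m. B u a = 0 \<longrightarrow> \<beta> u i a = 0) \<and>
     (\<forall>(u, a) \<in> req_pairs n m R.
        is_lin_comb ((SIGMA l:{..<n}. {..<h l}) <+> {..<m}) {..<m}
          (stack (\<lambda>(l, i) c. \<beta> l i c) (diag_mat (B u))) (unit_vec a))"

definition task_based_solution :: "nat \<Rightarrow> nat \<Rightarrow> (nat \<Rightarrow> nat \<Rightarrow> bit) \<Rightarrow> (nat \<Rightarrow> nat \<Rightarrow> bit)
    \<Rightarrow> (nat \<Rightarrow> nat) \<Rightarrow> (nat \<Rightarrow> nat \<Rightarrow> nat \<Rightarrow> bit) \<Rightarrow> bool" where
  "task_based_solution n m R B h \<beta> \<longleftrightarrow>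
     linear_broadcast_solution n m R B h \<beta> \<and>
     (\<forall>(u, a) \<in> req_pairs n m R. \<exists>l<n.
        is_lin_comb ({..<h l} <+> {..<m}) {..<m} (stack (\<beta> l) (diag_mat (B u))) (unit_vec a))"

definition solution_length :: "nat \<Rightarrow> (nat \<Rightarrow> nat) \<Rightarrow> nat" where
  "solution_length n h = (\<Sum>u<n. h u)"

end

(* Every requirement (u,a) lies in exactly one part Nt w. The centralized solution of the
   problem induced by Nt w lets u recover block a from beta w and its own side information
   alone, and padding beta w with zero columns keeps this valid on all m blocks because e_a
   vanishes outside the induced block set. Since Nt w is contained in the sender neighbourhood
   of w, every induced block is known to w, so beta w only uses blocks that w holds. *)
theory Submission
  imports Defs
begin

(* Keep sums over bit as ring sums; otherwise simp rewrites them into parities of cardinalities. *)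
declare add_bit_eq_xor [simp del] mult_bit_eq_and [simp del]

lemma sum_times_diag_mat:
  assumes "finite C"
  shows "(\<Sum>r\<in>C. (f r :: bit) * diag_mat d r c) = (if c \<in> C then f c * d c else 0)"
  using assms by (simp add: diag_mat_def if_distrib[of "\<lambda>x. f _ * x"] sum.delta' cong: if_cong)

lemma sum_Plus_stack_diag_mat:
  assumes "finite I" "finite C" "c \<in> C"
  shows "(\<Sum>i\<in>I <+> C. \<alpha> i * stack M (diag_mat d) i c)
    = (\<Sum>i\<in>I. \<alpha> (Inl i) * M i c) + \<alpha> (Inr c) * d c"
  using assms by (simp add: sum.Plus stack_def sum_times_diag_mat)

lemma is_lin_comb_stack_diag_mat_iff:
  assumes "finite I" "finite C"
  shows "is_lin_comb (I <+> C) C (stack M (diag_mat d)) v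
    \<longleftrightarrow> (\<exists>\<alpha> \<gamma>. \<forall>c\<in>C. v c = (\<Sum>i\<in>I. \<alpha> i * M i c) + \<gamma> c * d c)"
proof
  assume "is_lin_comb (I <+> C) C (stack M (diag_mat d)) v"
  then obtain \<alpha> where "\<forall>c\<in>C. v c = (\<Sum>i\<in>I <+> C. \<alpha> i * stack M (diag_mat d) i c)"
    unfolding is_lin_comb_def by blast
  then have "\<forall>c\<in>C. v c = (\<Sum>i\<in>I. \<alpha> (Inl i) * M i c) + \<alpha> (Inr c) * d c"
    using assms by (simp add: sum_Plus_stack_diag_mat)
  then show "\<exists>\<alpha> \<gamma>. \<forall>c\<in>C. v c = (\<Sum>i\<in>I. \<alpha> i * M i c) + \<gamma> c * d c"
    by (intro exI[of _ "\<alpha> \<circ> Inl"] exI[of _ "\<alpha> \<circ> Inr"]) simp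
next
  assume "\<exists>\<alpha> \<gamma>. \<forall>c\<in>C. v c = (\<Sum>i\<in>I. \<alpha> i * M i c) + \<gamma> c * d c"
  then obtain \<alpha> \<gamma> where "\<forall>c\<in>C. v c = (\<Sum>i\<in>I. \<alpha> i * M i c) + \<gamma> c * d c" by blast
  then show "is_lin_comb (I <+> C) C (stack M (diag_mat d)) v"
    using assms unfolding is_lin_comb_def
    by (intro exI[of _ "case_sum \<alpha> \<gamma>"]) (simp add: sum_Plus_stack_diag_mat)
qed

lemma is_lin_comb_zero_col_ext:
  assumes lc: "is_lin_comb ({..<h} <+> C) C (stack M (diag_mat d)) v"
    and ext: "zero_col_ext m C h M M'"
    and C: "C \<subseteq> {..<m}"
    and v: "\<forall>c<m. c \<notin> C \<longrightarrow> v c = 0"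
  shows "is_lin_comb ({..<h} <+> {..<m}) {..<m} (stack M' (diag_mat d)) v"
proof -
  have "finite C" using C finite_subset by blast
  then obtain \<alpha> \<gamma> where \<alpha>\<gamma>: "\<forall>c\<in>C. v c = (\<Sum>i<h. \<alpha> i * M i c) + \<gamma> c * d c"
    using lc is_lin_comb_stack_diag_mat_iff by blast
  define \<gamma>' where "\<gamma>' c = (if c \<in> C then \<gamma> c else 0)" for c
  have "\<forall>c\<in>{..<m}. v c = (\<Sum>i<h. \<alpha> i * M' i c) + \<gamma>' c * d c"
  proof
    fix c assume "c \<in> {..<m}"
    then show "v c = (\<Sum>i<h. \<alpha> i * M' i c) + \<gamma>' c * d c"
      using \<alpha>\<gamma> ext v by (cases "c \<in> C") (simp_all add: zero_col_ext_def \<gamma>'_def)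
  qed
  then show ?thesis
    using is_lin_comb_stack_diag_mat_iff[of "{..<h}" "{..<m}"] by blast
qed

lemma sum_Sigma_single_fiber:
  fixes f :: "nat \<Rightarrow> 'b::comm_monoid_add" and h :: "nat \<Rightarrow> nat" and l n :: nat
  assumes "l < n"
  shows "(\<Sum>p\<in>(SIGMA l':{..<n}. {..<h l'}). if fst p = l then f (snd p) else 0) = (\<Sum>k<h l. f k)"
proof -
  have "(\<Sum>p\<in>(SIGMA l':{..<n}. {..<h l'}). if fst p = l then f (snd p) else 0)
      = (\<Sum>l'<n. \<Sum>k<h l'. if l' = l then f k else 0)"
    by (subst sum.Sigma) (auto simp: split_def)
  also have "\<dots> = (\<Sum>l'<n. if l' = l then (\<Sum>k<h l. f k) else 0)"
    by (rule sum.cong) auto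
  also have "\<dots> = (\<Sum>k<h l. f k)"
    using assms by (simp add: sum.delta')
  finally show ?thesis .
qed

lemma is_lin_comb_stack_Sigma:
  fixes h :: "nat \<Rightarrow> nat" and l n :: nat
  assumes lc: "is_lin_comb ({..<h l} <+> C) C (stack (\<beta> l) (diag_mat d)) v"
    and "l < n" "finite C"
  shows "is_lin_comb ((SIGMA l:{..<n}. {..<h l}) <+> C) C (stack (\<lambda>(l, i) c. \<beta> l i c) (diag_mat d)) v"
proof -
  obtain \<alpha> \<gamma> where \<alpha>\<gamma>: "\<forall>c\<in>C. v c = (\<Sum>i<h l. \<alpha> i * \<beta> l i c) + \<gamma> c * d c"
    using lc \<open>finite C\<close> is_lin_comb_stack_diag_mat_iff by blast
  define \<alpha>' where "\<alpha>' p = (if fst p = l then \<alpha> (snd p) else 0)" for p :: "nat \<times> nat"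
  have "(\<Sum>p\<in>(SIGMA l':{..<n}. {..<h l'}). \<alpha>' p * (case p of (l', i) \<Rightarrow> \<beta> l' i c))
      = (\<Sum>i<h l. \<alpha> i * \<beta> l i c)" for c
  proof -
    have "(\<Sum>p\<in>(SIGMA l':{..<n}. {..<h l'}). \<alpha>' p * (case p of (l', i) \<Rightarrow> \<beta> l' i c))
        = (\<Sum>p\<in>(SIGMA l':{..<n}. {..<h l'}). if fst p = l then \<alpha> (snd p) * \<beta> l (snd p) c else 0)"
      by (rule sum.cong) (auto simp: \<alpha>'_def)
    also have "\<dots> = (\<Sum>i<h l. \<alpha> i * \<beta> l i c)"
      by (rule sum_Sigma_single_fiber[OF \<open>l < n\<close>])
    finally show ?thesis .
  qed
  then have "\<forall>c\<in>C. v c = (\<Sum>p\<in>(SIGMA l':{..<n}. {..<h l'}). \<alpha>' p * (case p of (l', i) \<Rightarrow> \<beta> l' i c))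
      + \<gamma> c * d c"
    using \<alpha>\<gamma> by simp
  then show ?thesis
    using is_lin_comb_stack_diag_mat_iff[of "SIGMA l':{..<n}. {..<h l'}" C] \<open>finite C\<close>
    by (auto simp: split_beta)
qed

lemma task_based_solutionI:
  assumes "\<forall>u<n. \<forall>i<h u. \<forall>a<m. B u a = 0 \<longrightarrow> \<beta> u i a = 0"
    and "\<forall>(u, a)\<in>req_pairs n m R. \<exists>l<n.
      is_lin_comb ({..<h l} <+> {..<m}) {..<m} (stack (\<beta> l) (diag_mat (B u))) (unit_vec a)"
  shows "task_based_solution n m R B h \<beta>"
  using assms unfolding task_based_solution_def linear_broadcast_solution_def
  by (fastforce intro: is_lin_comb_stack_Sigma)

lemma induced_blocks_nbhd_partition:
  assumes "nbhd_partition n m R B Nt" "w < n"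
  shows "induced_blocks (Nt w) \<subseteq> {b. b < m \<and> B w b = 1}"
  using assms unfolding nbhd_partition_def sender_nbhd_def req_pairs_def induced_blocks_def
  by blast

theorem lemma2:
  fixes n m :: nat and R B :: "nat \<Rightarrow> nat \<Rightarrow> bit"
    and Nt :: "nat \<Rightarrow> (nat \<times> nat) set"
    and h :: "nat \<Rightarrow> nat" and \<beta>c \<beta> :: "nat \<Rightarrow> nat \<Rightarrow> nat \<Rightarrow> bit"
  assumes "eic_problem n m R B"
    and "nbhd_partition n m R B Nt"
    and "\<forall>w<n. centralized_solution n (induced_blocks (Nt w)) (induced_R (Nt w)) B (h w) (\<beta>c w)"
    and "\<forall>w<n. zero_col_ext m (induced_blocks (Nt w)) (h w) (\<beta>c w) (\<beta> w)"
  shows "task_based_solution n m R B h \<beta> \<and> solution_length n h = (\<Sum>i<n. h i)"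
proof -
  note blocks = induced_blocks_nbhd_partition[OF assms(2)]
  have "\<forall>u<n. \<forall>i<h u. \<forall>a<m. B u a = 0 \<longrightarrow> \<beta> u i a = 0"
    using assms(4) blocks unfolding zero_col_ext_def by fastforce
  moreover have "\<exists>l<n.
      is_lin_comb ({..<h l} <+> {..<m}) {..<m} (stack (\<beta> l) (diag_mat (B u))) (unit_vec a)"
    if ua: "(u, a) \<in> req_pairs n m R" for u a
  proof -
    obtain w where w: "w < n" "(u, a) \<in> Nt w"
      using ua assms(2) unfolding nbhd_partition_def by blast
    let ?C = "induced_blocks (Nt w)"
    have "a \<in> ?C" using w(2) unfolding induced_blocks_def by blast
    moreover have "u < n" using ua unfolding req_pairs_def by simp
    ultimately have "is_lin_comb ({..<h w} <+> ?C) ?C (stack (\<beta>c w) (diag_mat (B u))) (unit_vec a)"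
      using assms(3) w unfolding centralized_solution_def induced_R_def by simp
    then have "is_lin_comb ({..<h w} <+> {..<m}) {..<m} (stack (\<beta> w) (diag_mat (B u))) (unit_vec a)"
      using assms(4) w(1) blocks[OF w(1)] \<open>a \<in> ?C\<close>
      by (intro is_lin_comb_zero_col_ext) (auto simp: unit_vec_def)
    then show ?thesis using w(1) by blast
  qed
  ultimately show ?thesis
    by (auto intro: task_based_solutionI simp: solution_length_def)
qed

end
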